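(* Let $S$ be a semigroup which is categorical at zero, $0$-left cancellative, right reductive, has right local units and admits least common multiples. Then the nonzero elements of the inverse hull $\mathcal H(S)$ are precisely the elements $\theta_s\theta_t^{-1}$ with $s,t\in S\setminus\{0\}$ and $s^+=t^+$. Moreover, if $s_1,t_1,s_2,t_2\in S\setminus\{0\}$ with $s_1^+=t_1^+$ and $s_2^+=t_2^+$, then $\theta_{s_1}\theta_{t_1}^{-1}=\theta_{s_2}\theta_{t_2}^{-1}$ if and only if there exist $x,y\in S$ with $xy=s_1^+$, $yx=s_2^+$, $s_1x=s_2$, $t_1x=t_2$, $s_2y=s_1$ and $t_2y=t_1$.
   Context: $S$ has zero $0$, $S'=S\setminus\{0\}$. Categorical at zero: $rs\neq0$ and $st\neq0$ imply $rst\neq0$. $0$-left cancellative: $st=sr\neq0\Rightarrow t=r$. Right reductive: $sx=tx$ for all $x$ implies $s=t$. Right local units: each $s$ has an idempotent $e$ with $se=s$; under these hypotheses each nonzero $s$ has a unique idempotent $s^+$ with $ss^+=s$. Least common multiples: with $\tilde S=S\cup\{1\}$, $s\mid t$ iff $t\in s\tilde S$; $r$ is an lcm of $s,t$ if $sS\cap tS=rS$, $s\mid r$, $t\mid r$; every pair has one. $\theta_s:\{x\in S':sx\neq0\}\to sS\setminus\{0\}$, $x\mapsto sx$; $\mathcal H(S)$ is the inverse semigroup of partial bijections of $S'$ generated by all $\theta_s$ (its zero is the empty map). *)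

theory Defs
  imports Main
begin

text \<open>A semigroup with zero is modelled as a type of class semigroup_mult and mult_zero
  (0 * a = 0 and a * 0 = 0); the semigroup S is the whole type, S' is the set of nonzero elements.\<close>

definition categorical_at_zero :: "('a::{semigroup_mult,mult_zero}) itself \<Rightarrow> bool" where
  "categorical_at_zero _ \<longleftrightarrow>
     (\<forall>r s t :: 'a. r * s \<noteq> 0 \<and> s * t \<noteq> 0 \<longrightarrow> r * s * t \<noteq> 0)"

definition zero_left_cancellative :: "('a::{semigroup_mult,mult_zero}) itself \<Rightarrow> bool" where
  "zero_left_cancellative _ \<longleftrightarrow>
     (\<forall>s t r :: 'a. s * t = s * r \<and> s * t \<noteq> 0 \<longrightarrow> t = r)"

definition right_reductive :: "('a::{semigroup_mult,mult_zero}) itself \<Rightarrow> bool" where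
  "right_reductive _ \<longleftrightarrow> (\<forall>s t :: 'a. (\<forall>x. s * x = t * x) \<longrightarrow> s = t)"

definition right_local_units :: "('a::{semigroup_mult,mult_zero}) itself \<Rightarrow> bool" where
  "right_local_units _ \<longleftrightarrow> (\<forall>s :: 'a. \<exists>e. e * e = e \<and> s * e = s)"

text \<open>Divisibility with adjoined identity: s divides t iff t = s or t = s * x.\<close>
definition sdvd :: "'a::{semigroup_mult,mult_zero} \<Rightarrow> 'a \<Rightarrow> bool" where
  "sdvd s t \<longleftrightarrow> t = s \<or> (\<exists>x. t = s * x)"

definition principal_right :: "'a::{semigroup_mult,mult_zero} \<Rightarrow> 'a set" where
  "principal_right s = {s * x | x. True}"

definition is_lcm :: "'a::{semigroup_mult,mult_zero} \<Rightarrow> 'a \<Rightarrow> 'a \<Rightarrow> bool" where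
  "is_lcm r s t \<longleftrightarrow> principal_right s \<inter> principal_right t = principal_right r
      \<and> sdvd s r \<and> sdvd t r"

definition has_lcms :: "('a::{semigroup_mult,mult_zero}) itself \<Rightarrow> bool" where
  "has_lcms _ \<longleftrightarrow> (\<forall>s t :: 'a. \<exists>r. is_lcm r s t)"

definition splus :: "'a::{semigroup_mult,mult_zero} \<Rightarrow> 'a" where
  "splus s = (THE e. e * e = e \<and> s * e = s)"

definition theta :: "'a::{semigroup_mult,mult_zero} \<Rightarrow> 'a \<Rightarrow> 'a option" where
  "theta s = (\<lambda>x. if x \<noteq> 0 \<and> s * x \<noteq> 0 then Some (s * x) else None)"

definition pinv :: "('a \<Rightarrow> 'b option) \<Rightarrow> 'b \<Rightarrow> 'a option" where
  "pinv f = (\<lambda>y. if \<exists>x. f x = Some y then Some (THE x. f x = Some y) else None)"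

text \<open>Composition (map_comp) is
  right-to-left: applying map_comp f g to x applies g first, then f.\<close>
inductive_set inverse_hull :: "('a::{semigroup_mult,mult_zero} \<Rightarrow> 'a option) set" where
  gen: "theta s \<in> inverse_hull"
| inv: "f \<in> inverse_hull \<Longrightarrow> pinv f \<in> inverse_hull"
| comp: "f \<in> inverse_hull \<Longrightarrow> g \<in> inverse_hull \<Longrightarrow> f \<circ>\<^sub>m g \<in> inverse_hull"

end

theory Submission
  imports Defs
begin

text \<open>Every map \<open>\<theta>\<^sub>s\<theta>\<^sub>t\<inverse>\<close> sends \<open>t z\<close> to \<open>s z\<close>. Composing two of them,
  \<open>\<theta>\<^sub>s\<^sub>1\<theta>\<^sub>t\<^sub>1\<inverse>\<theta>\<^sub>s\<^sub>2\<theta>\<^sub>t\<^sub>2\<inverse>\<close>, only sees the common right multiples of \<open>s\<^sub>2\<close> and \<open>t\<^sub>1\<close>; these are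
  the multiples of an lcm \<open>r = s\<^sub>2 a = t\<^sub>1 b\<close>, so by left cancellation the composite is
  \<open>\<theta>\<^sub>s\<^sub>1\<^sub>b\<theta>\<^sub>t\<^sub>2\<^sub>a\<inverse>\<close>, or empty if \<open>r = 0\<close>. Inversion swaps \<open>s\<close> and \<open>t\<close>, and
  \<open>\<theta>\<^sub>s = \<theta>\<^sub>s\<theta>\<^sub>s\<^sub>+\<inverse>\<close>, so these maps exhaust the nonzero part of the inverse hull.
  If two of them agree, evaluating at \<open>t\<^sub>1\<close> and \<open>t\<^sub>2\<close> yields the elements \<open>y\<close> and \<open>x\<close>,
  and left cancellation of \<open>t\<^sub>1 x y = t\<^sub>1 = t\<^sub>1 t\<^sub>1\<^sup>+\<close> gives \<open>x y = s\<^sub>1\<^sup>+\<close>.\<close>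

lemma map_eqI_Some: "(\<And>x y. f x = Some y \<longleftrightarrow> g x = Some y) \<Longrightarrow> f = g"
  by (rule ext) (metis not_Some_eq)

lemma pinv_Some_iff:
  assumes inj: "\<And>x x' y. f x = Some y \<Longrightarrow> f x' = Some y \<Longrightarrow> x = x'"
  shows "pinv f y = Some x \<longleftrightarrow> f x = Some y"
proof
  assume "pinv f y = Some x"
  then obtain x0 where x0: "f x0 = Some y" and x: "x = (THE x. f x = Some y)"
    unfolding pinv_def by (auto split: if_splits)
  have "(THE x. f x = Some y) = x0"
    using x0 inj by (intro the_equality) auto
  then show "f x = Some y" using x x0 by simp
next
  assume fx: "f x = Some y"
  then have "(THE x. f x = Some y) = x"
    using inj by (intro the_equality) auto
  then show "pinv f y = Some x" using fx unfolding pinv_def by auto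
qed

lemma pinv_empty [simp]: "pinv Map.empty = Map.empty"
  unfolding pinv_def by simp

lemma mult_in_principal_right [simp]: "s * x \<in> principal_right s"
  unfolding principal_right_def by blast

lemma theta_zero: "theta (0::'a::{semigroup_mult,mult_zero}) = Map.empty"
  unfolding theta_def by simp

lemma theta_Some_iff: "theta s x = Some y \<longleftrightarrow> s * x \<noteq> 0 \<and> y = s * x"
  unfolding theta_def by auto

locale lcm_semigroup =
  fixes T :: "('a::{semigroup_mult,mult_zero}) itself"
  assumes categorical_at_zero: "categorical_at_zero T"
    and zero_left_cancellative: "zero_left_cancellative T"
    and right_reductive: "right_reductive T"
    and right_local_units: "right_local_units T"
    and has_lcms: "has_lcms T"
begin

lemma mult_mult_neq_zero: "r * s \<noteq> 0 \<Longrightarrow> s * t \<noteq> 0 \<Longrightarrow> r * s * t \<noteq> (0::'a)"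
  using categorical_at_zero unfolding categorical_at_zero_def by blast

lemma left_cancel: "s * t = s * r \<Longrightarrow> s * t \<noteq> (0::'a) \<Longrightarrow> t = r"
  using zero_left_cancellative unfolding zero_left_cancellative_def by blast

lemma right_reductive_eqI: "(\<And>x. s * x = t * x) \<Longrightarrow> s = (t::'a)"
  using right_reductive unfolding right_reductive_def by blast

lemma obtain_lcm: obtains r :: 'a where "is_lcm r s t"
  using has_lcms unfolding has_lcms_def by blast

subsection \<open>The idempotent \<open>s\<^sup>+\<close>\<close>

lemma right_identity_unique:
  fixes s e f :: 'a
  assumes "s \<noteq> 0" "s * e = s" "s * f = s"
  shows "e = f"
proof (rule right_reductive_eqI)
  fix x
  show "e * x = f * x"
  proof (cases "s * x = 0")
    case True
    \<comment> \<open>categoricity: \<open>e x \<noteq> 0\<close> would force \<open>s x = s e x \<noteq> 0\<close>\<close>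
    then have "e * x = 0" "f * x = 0"
      using assms mult_mult_neq_zero[of s e x] mult_mult_neq_zero[of s f x] by auto
    then show ?thesis by simp
  next
    case False
    then show ?thesis
      using assms left_cancel[of s "e * x" "f * x"] by (simp add: mult.assoc[symmetric])
  qed
qed

lemma splus_eqI: "s \<noteq> 0 \<Longrightarrow> e * e = e \<Longrightarrow> s * e = s \<Longrightarrow> splus s = (e::'a)"
  unfolding splus_def by (rule the_equality) (auto intro: right_identity_unique)

lemma
  assumes "(s::'a) \<noteq> 0"
  shows splus_idem: "splus s * splus s = splus s"
    and mult_splus: "s * splus s = s"
proof -
  obtain e :: 'a where "e * e = e" "s * e = s"
    using right_local_units unfolding right_local_units_def by blast
  with splus_eqI[OF assms] show "splus s * splus s = splus s" "s * splus s = s" by auto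
qed

lemma splus_neq_zero: "(s::'a) \<noteq> 0 \<Longrightarrow> splus s \<noteq> 0"
  by (metis mult_splus mult_zero_right)

lemma splus_splus: "(s::'a) \<noteq> 0 \<Longrightarrow> splus (splus s) = splus s"
  by (simp add: splus_eqI splus_idem splus_neq_zero)

lemma idem_mult_eq: "(e::'a) * e = e \<Longrightarrow> e * x \<noteq> 0 \<Longrightarrow> e * x = x"
  using left_cancel[of e "e * x" x] by (simp add: mult.assoc[symmetric])

lemma mult_neq_zero_iff_splus:
  assumes "(s::'a) \<noteq> 0"
  shows "s * x \<noteq> 0 \<longleftrightarrow> splus s * x \<noteq> 0"
  using mult_mult_neq_zero[of s "splus s" x] mult_splus[OF assms] assms
  by (metis mult.assoc mult_zero_right)

lemma splus_mult:
  assumes "(s::'a) * b \<noteq> 0"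
  shows "splus (s * b) = splus b"
proof -
  have "b \<noteq> 0" using assms by auto
  then show ?thesis
    using assms by (intro splus_eqI) (simp_all add: mult.assoc mult_splus splus_idem)
qed

lemma self_in_principal_right: "(r::'a) \<noteq> 0 \<Longrightarrow> r \<in> principal_right r"
  by (metis mult_in_principal_right mult_splus)

subsection \<open>The maps \<open>\<theta>\<^sub>s\<theta>\<^sub>t\<inverse>\<close>\<close>

lemma pinv_theta_Some_iff: "pinv (theta t) y = Some z \<longleftrightarrow> (t::'a) * z \<noteq> 0 \<and> y = t * z"
proof -
  have "pinv (theta t) y = Some z \<longleftrightarrow> theta t z = Some y"
    by (rule pinv_Some_iff) (auto simp: theta_Some_iff intro: left_cancel)
  then show ?thesis by (auto simp: theta_Some_iff)
qed

lemma theta_pinv_theta_Some_iff: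
  "(theta s \<circ>\<^sub>m pinv (theta t)) w = Some v \<longleftrightarrow>
     (\<exists>z. (t::'a) * z \<noteq> 0 \<and> s * z \<noteq> 0 \<and> w = t * z \<and> v = s * z)"
  by (auto simp: map_comp_Some_iff pinv_theta_Some_iff theta_Some_iff)

lemma theta_pinv_theta_at:
  assumes "(s::'a) \<noteq> 0" "t \<noteq> 0" "splus s = splus t"
  shows "(theta s \<circ>\<^sub>m pinv (theta t)) t = Some s"
  unfolding theta_pinv_theta_Some_iff using assms
  by (intro exI[of _ "splus t"]) (metis mult_splus)

lemma theta_pinv_theta_neq_empty:
  "(s::'a) \<noteq> 0 \<Longrightarrow> t \<noteq> 0 \<Longrightarrow> splus s = splus t \<Longrightarrow> theta s \<circ>\<^sub>m pinv (theta t) \<noteq> Map.empty"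
  using theta_pinv_theta_at by force

lemma theta_eq_theta_pinv_theta_splus:
  assumes "(s::'a) \<noteq> 0"
  shows "theta s = theta s \<circ>\<^sub>m pinv (theta (splus s))"
proof (rule map_eqI_Some)
  fix w v
  have fix_w: "splus s * z \<noteq> 0 \<Longrightarrow> splus s * z = z" for z
    by (rule idem_mult_eq[OF splus_idem[OF assms]])
  show "theta s w = Some v \<longleftrightarrow> (theta s \<circ>\<^sub>m pinv (theta (splus s))) w = Some v"
    unfolding theta_pinv_theta_Some_iff theta_Some_iff
  proof (intro iffI; elim exE conjE)
    assume "s * w \<noteq> 0" "v = s * w"
    moreover from this have "splus s * w \<noteq> 0"
      using mult_neq_zero_iff_splus[OF assms] by blast
    ultimately show "\<exists>z. splus s * z \<noteq> 0 \<and> s * z \<noteq> 0 \<and> w = splus s * z \<and> v = s * z"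
      using fix_w[of w] by (intro exI[of _ w]) simp
  next
    fix z
    assume "splus s * z \<noteq> 0" "s * z \<noteq> 0" "w = splus s * z" "v = s * z"
    then show "s * w \<noteq> 0 \<and> v = s * w" using fix_w[of z] by simp
  qed
qed

lemma pinv_theta_pinv_theta: "pinv (theta s \<circ>\<^sub>m pinv (theta t)) = theta (t::'a) \<circ>\<^sub>m pinv (theta s)"
proof (rule map_eqI_Some)
  fix w v
  have "pinv (theta s \<circ>\<^sub>m pinv (theta t)) w = Some v \<longleftrightarrow> (theta s \<circ>\<^sub>m pinv (theta t)) v = Some w"
  proof (rule pinv_Some_iff)
    fix x x' y
    assume "(theta s \<circ>\<^sub>m pinv (theta t)) x = Some y" "(theta s \<circ>\<^sub>m pinv (theta t)) x' = Some y"
    then obtain z z' where "x = t * z" "x' = t * z'" "s * z = s * z'" "s * z \<noteq> 0"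
      unfolding theta_pinv_theta_Some_iff by metis
    then show "x = x'" using left_cancel by metis
  qed
  then show "pinv (theta s \<circ>\<^sub>m pinv (theta t)) w = Some v \<longleftrightarrow> (theta t \<circ>\<^sub>m pinv (theta s)) w = Some v"
    unfolding theta_pinv_theta_Some_iff by blast
qed

lemma comp_theta_pinv_theta_Some_iff:
  "((theta s1 \<circ>\<^sub>m pinv (theta t1)) \<circ>\<^sub>m (theta s2 \<circ>\<^sub>m pinv (theta t2))) w = Some v \<longleftrightarrow>
     (\<exists>z1 z2. t2 * z2 \<noteq> 0 \<and> s2 * z2 \<noteq> 0 \<and> t1 * z1 \<noteq> 0 \<and> s1 * z1 \<noteq> 0
        \<and> w = t2 * z2 \<and> s2 * z2 = (t1::'a) * z1 \<and> v = s1 * z1)"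
  unfolding map_comp_Some_iff[of "theta s1 \<circ>\<^sub>m pinv (theta t1)"] theta_pinv_theta_Some_iff
  by blast

lemma comp_theta_pinv_theta_lcm_zero:
  assumes "is_lcm 0 s2 (t1::'a)"
  shows "(theta s1 \<circ>\<^sub>m pinv (theta t1)) \<circ>\<^sub>m (theta s2 \<circ>\<^sub>m pinv (theta t2)) = Map.empty"
proof (rule map_eqI_Some)
  fix w v
  have "principal_right s2 \<inter> principal_right t1 = {0}"
    using assms unfolding is_lcm_def principal_right_def by auto
  then have "s2 * z2 = t1 * z1 \<Longrightarrow> s2 * z2 = 0" for z1 z2
    by (metis Int_iff mult_in_principal_right singletonD)
  then show "((theta s1 \<circ>\<^sub>m pinv (theta t1)) \<circ>\<^sub>m (theta s2 \<circ>\<^sub>m pinv (theta t2))) w = Some v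
      \<longleftrightarrow> Map.empty w = Some v"
    unfolding comp_theta_pinv_theta_Some_iff by auto
qed

lemma comp_theta_pinv_theta_lcm:
  fixes s1 t1 s2 t2 r a b :: 'a
  assumes lcm: "is_lcm r s2 t1" and "r \<noteq> 0" and ra: "r = s2 * a" and rb: "r = t1 * b"
  shows "(theta s1 \<circ>\<^sub>m pinv (theta t1)) \<circ>\<^sub>m (theta s2 \<circ>\<^sub>m pinv (theta t2))
           = theta (s1 * b) \<circ>\<^sub>m pinv (theta (t2 * a))"
proof (rule map_eqI_Some)
  fix w v
  have common: "principal_right s2 \<inter> principal_right t1 = principal_right r"
    using lcm unfolding is_lcm_def by blast
  show "((theta s1 \<circ>\<^sub>m pinv (theta t1)) \<circ>\<^sub>m (theta s2 \<circ>\<^sub>m pinv (theta t2))) w = Some v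
      \<longleftrightarrow> (theta (s1 * b) \<circ>\<^sub>m pinv (theta (t2 * a))) w = Some v"
    unfolding comp_theta_pinv_theta_Some_iff theta_pinv_theta_Some_iff
  proof (intro iffI; elim exE conjE)
    fix z1 z2
    assume z: "t2 * z2 \<noteq> 0" "s2 * z2 \<noteq> 0" "t1 * z1 \<noteq> 0" "s1 * z1 \<noteq> 0"
      "w = t2 * z2" "s2 * z2 = t1 * z1" "v = s1 * z1"
    have "s2 * z2 \<in> principal_right r"
      using common z(6) by (metis Int_iff mult_in_principal_right)
    then obtain c where c: "s2 * z2 = r * c"
      unfolding principal_right_def by blast
    have "z2 = a * c"
      using c z(2) ra left_cancel by (metis mult.assoc)
    moreover have "z1 = b * c"
      using c z(3,6) rb left_cancel by (metis mult.assoc)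
    ultimately show "\<exists>z. t2 * a * z \<noteq> 0 \<and> s1 * b * z \<noteq> 0 \<and> w = t2 * a * z \<and> v = s1 * b * z"
      using z by (intro exI[of _ c]) (simp add: mult.assoc)
  next
    fix z
    assume z: "t2 * a * z \<noteq> 0" "s1 * b * z \<noteq> 0" "w = t2 * a * z" "v = s1 * b * z"
    have "a * z \<noteq> 0"
      using z(1) by (metis mult.assoc mult_zero_right)
    then have "s2 * (a * z) \<noteq> 0"
      using mult_mult_neq_zero[of s2 a z] \<open>r \<noteq> 0\<close> ra by (simp add: mult.assoc)
    moreover have "s2 * (a * z) = t1 * (b * z)"
      using ra rb by (simp add: mult.assoc[symmetric])
    ultimately show "\<exists>z1 z2. t2 * z2 \<noteq> 0 \<and> s2 * z2 \<noteq> 0 \<and> t1 * z1 \<noteq> 0 \<and> s1 * z1 \<noteq> 0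
        \<and> w = t2 * z2 \<and> s2 * z2 = t1 * z1 \<and> v = s1 * z1"
      using z by (metis mult.assoc)
  qed
qed

lemma splus_eq_lcm_cofactors:
  fixes s1 t2 r a b :: 'a
  assumes "r \<noteq> 0" "r = s2 * a" "r = t1 * b" "s1 * b \<noteq> 0" "t2 * a \<noteq> 0"
  shows "splus (s1 * b) = splus (t2 * a)"
  using assms splus_mult by metis

subsection \<open>The nonzero elements of the inverse hull\<close>

definition theta_quotients :: "('a \<Rightarrow> 'a option) set" where
  "theta_quotients = {theta s \<circ>\<^sub>m pinv (theta t) | s t. s \<noteq> 0 \<and> t \<noteq> 0 \<and> splus s = splus t}"

lemma theta_quotientsI:
  "(s::'a) \<noteq> 0 \<Longrightarrow> t \<noteq> 0 \<Longrightarrow> splus s = splus t \<Longrightarrow> theta s \<circ>\<^sub>m pinv (theta t) \<in> theta_quotients"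
  unfolding theta_quotients_def by blast

lemma theta_pinv_theta_in_theta_quotients:
  assumes "(s::'a) \<noteq> 0 \<Longrightarrow> t \<noteq> 0 \<Longrightarrow> splus s = splus t"
  shows "theta s \<circ>\<^sub>m pinv (theta t) \<in> insert Map.empty theta_quotients"
proof (cases "s \<noteq> 0 \<and> t \<noteq> 0")
  case True
  then show ?thesis using assms by (simp add: theta_quotientsI)
next
  case False
  then have "theta s \<circ>\<^sub>m pinv (theta t) = Map.empty"
    by (intro map_eqI_Some) (auto simp: theta_pinv_theta_Some_iff)
  then show ?thesis by simp
qed

lemma comp_in_theta_quotients:
  assumes "f \<in> theta_quotients" "g \<in> theta_quotients"
  shows "f \<circ>\<^sub>m g \<in> insert Map.empty theta_quotients"
proof -
  obtain s1 t1 s2 t2 :: 'a where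
    f: "f = theta s1 \<circ>\<^sub>m pinv (theta t1)" and g: "g = theta s2 \<circ>\<^sub>m pinv (theta t2)"
    using assms unfolding theta_quotients_def by blast
  obtain r where lcm: "is_lcm r s2 t1" by (rule obtain_lcm)
  show ?thesis
  proof (cases "r = 0")
    case True
    then show ?thesis using comp_theta_pinv_theta_lcm_zero lcm f g by simp
  next
    case False
    then have "r \<in> principal_right s2 \<inter> principal_right t1"
      using lcm self_in_principal_right unfolding is_lcm_def by blast
    then obtain a b where ra: "r = s2 * a" and rb: "r = t1 * b"
      unfolding principal_right_def by blast
    have "f \<circ>\<^sub>m g = theta (s1 * b) \<circ>\<^sub>m pinv (theta (t2 * a))"
      using comp_theta_pinv_theta_lcm[OF lcm False ra rb] f g by simp
    also have "\<dots> \<in> insert Map.empty theta_quotients"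
      by (intro theta_pinv_theta_in_theta_quotients splus_eq_lcm_cofactors[OF False ra rb])
    finally show ?thesis .
  qed
qed

lemma inverse_hull_subset: "inverse_hull \<subseteq> insert Map.empty (theta_quotients :: ('a \<Rightarrow> 'a option) set)"
proof
  fix f :: "'a \<Rightarrow> 'a option"
  assume "f \<in> inverse_hull"
  then show "f \<in> insert Map.empty theta_quotients"
  proof (induction rule: inverse_hull.induct)
    case (gen s)
    show ?case
    proof (cases "s = 0")
      case True
      then show ?thesis by (simp add: theta_zero)
    next
      case False
      then have "theta s \<circ>\<^sub>m pinv (theta (splus s)) \<in> insert Map.empty theta_quotients"
        by (intro theta_pinv_theta_in_theta_quotients) (simp add: splus_splus)
      then show ?thesis
        using theta_eq_theta_pinv_theta_splus[OF False] by simp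
    qed
  next
    case (inv f)
    show ?case
    proof (cases "f = Map.empty")
      case False
      with inv.IH obtain s t :: 'a where st: "s \<noteq> 0" "t \<noteq> 0" "splus s = splus t"
        and f: "f = theta s \<circ>\<^sub>m pinv (theta t)"
        unfolding theta_quotients_def by blast
      have "pinv f = theta t \<circ>\<^sub>m pinv (theta s)"
        using f by (simp add: pinv_theta_pinv_theta)
      then show ?thesis
        using st by (simp add: theta_quotientsI)
    qed simp
  next
    case (comp f g)
    then show ?case
      using comp_in_theta_quotients by auto
  qed
qed

lemma theta_quotients_subset: "theta_quotients \<subseteq> (inverse_hull :: ('a \<Rightarrow> 'a option) set)"
  unfolding theta_quotients_def by (auto intro: inverse_hull.intros)

lemma empty_notin_theta_quotients: "Map.empty \<notin> (theta_quotients :: ('a \<Rightarrow> 'a option) set)"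
proof
  assume "Map.empty \<in> (theta_quotients :: ('a \<Rightarrow> 'a option) set)"
  then obtain s t :: 'a where "s \<noteq> 0" "t \<noteq> 0" "splus s = splus t"
    and "Map.empty = theta s \<circ>\<^sub>m pinv (theta t)"
    unfolding theta_quotients_def by blast
  then show False using theta_pinv_theta_neq_empty by metis
qed

lemma nonzero_inverse_hull:
  "{f \<in> (inverse_hull :: ('a \<Rightarrow> 'a option) set). f \<noteq> Map.empty} = theta_quotients"
  using inverse_hull_subset theta_quotients_subset empty_notin_theta_quotients by blast

subsection \<open>Equality of the maps \<open>\<theta>\<^sub>s\<theta>\<^sub>t\<inverse>\<close>\<close>

lemma theta_pinv_theta_eqI:
  fixes s1 t1 s2 t2 x y :: 'a
  assumes "s1 * x = s2" "t1 * x = t2" "s2 * y = s1" "t2 * y = t1"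
  shows "theta s1 \<circ>\<^sub>m pinv (theta t1) = theta s2 \<circ>\<^sub>m pinv (theta t2)"
proof (rule map_eqI_Some)
  fix w v
  have "t1 * z = t2 * (y * z)" "s1 * z = s2 * (y * z)"
       "t2 * z = t1 * (x * z)" "s2 * z = s1 * (x * z)" for z
    using assms by (simp_all add: mult.assoc[symmetric])
  then show "(theta s1 \<circ>\<^sub>m pinv (theta t1)) w = Some v \<longleftrightarrow> (theta s2 \<circ>\<^sub>m pinv (theta t2)) w = Some v"
    unfolding theta_pinv_theta_Some_iff by metis
qed

lemma theta_pinv_theta_eqD:
  fixes s1 t1 s2 t2 :: 'a
  assumes nz: "s1 \<noteq> 0" "t1 \<noteq> 0" "s2 \<noteq> 0" "t2 \<noteq> 0"
    and plus: "splus s1 = splus t1" "splus s2 = splus t2"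
    and eq: "theta s1 \<circ>\<^sub>m pinv (theta t1) = theta s2 \<circ>\<^sub>m pinv (theta t2)"
  shows "\<exists>x y. x * y = splus s1 \<and> y * x = splus s2 \<and> s1 * x = s2 \<and> t1 * x = t2
           \<and> s2 * y = s1 \<and> t2 * y = t1"
proof -
  have "(theta s2 \<circ>\<^sub>m pinv (theta t2)) t1 = Some s1"
    using theta_pinv_theta_at[OF nz(1,2) plus(1)] eq by simp
  then obtain y where y: "t1 = t2 * y" "s1 = s2 * y"
    unfolding theta_pinv_theta_Some_iff by blast
  have "(theta s1 \<circ>\<^sub>m pinv (theta t1)) t2 = Some s2"
    using theta_pinv_theta_at[OF nz(3,4) plus(2)] eq by simp
  then obtain x where x: "t2 = t1 * x" "s2 = s1 * x"
    unfolding theta_pinv_theta_Some_iff by blast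
  have "t1 * (x * y) = t1 * splus t1" "t2 * (y * x) = t2 * splus t2"
    using x y mult_splus nz by (simp_all add: mult.assoc[symmetric])
  then have "x * y = splus s1" "y * x = splus s2"
    using left_cancel mult_splus nz plus by metis+
  with x y show ?thesis by metis
qed

end

theorem theorem7p22:
  fixes T :: "('a::{semigroup_mult,mult_zero}) itself"
  assumes "categorical_at_zero T"
    and "zero_left_cancellative T"
    and "right_reductive T"
    and "right_local_units T"
    and "has_lcms T"
  shows "{f \<in> (inverse_hull :: ('a \<Rightarrow> 'a option) set). f \<noteq> Map.empty}
           = {theta s \<circ>\<^sub>m pinv (theta t) | s t :: 'a. s \<noteq> 0 \<and> t \<noteq> 0 \<and> splus s = splus t}
         \<and> (\<forall>s1 t1 s2 t2 :: 'a. s1 \<noteq> 0 \<longrightarrow> t1 \<noteq> 0 \<longrightarrow> s2 \<noteq> 0 \<longrightarrow> t2 \<noteq> 0 \<longrightarrow>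
           splus s1 = splus t1 \<longrightarrow> splus s2 = splus t2 \<longrightarrow>
           (theta s1 \<circ>\<^sub>m pinv (theta t1) = theta s2 \<circ>\<^sub>m pinv (theta t2)
            \<longleftrightarrow> (\<exists>x y. x * y = splus s1 \<and> y * x = splus s2 \<and> s1 * x = s2 \<and> t1 * x = t2
                      \<and> s2 * y = s1 \<and> t2 * y = t1)))"
proof -
  interpret lcm_semigroup T
    using assms by unfold_locales
  show ?thesis
  proof (intro conjI allI impI)
    show "{f \<in> (inverse_hull :: ('a \<Rightarrow> 'a option) set). f \<noteq> Map.empty}
           = {theta s \<circ>\<^sub>m pinv (theta t) | s t :: 'a. s \<noteq> 0 \<and> t \<noteq> 0 \<and> splus s = splus t}"
      using nonzero_inverse_hull unfolding theta_quotients_def .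
  next
    fix s1 t1 s2 t2 :: 'a
    assume "s1 \<noteq> 0" "t1 \<noteq> 0" "s2 \<noteq> 0" "t2 \<noteq> 0" "splus s1 = splus t1" "splus s2 = splus t2"
    then show "theta s1 \<circ>\<^sub>m pinv (theta t1) = theta s2 \<circ>\<^sub>m pinv (theta t2)
        \<longleftrightarrow> (\<exists>x y. x * y = splus s1 \<and> y * x = splus s2 \<and> s1 * x = s2 \<and> t1 * x = t2
                  \<and> s2 * y = s1 \<and> t2 * y = t1)"
      using theta_pinv_theta_eqD theta_pinv_theta_eqI by blast
  qed
qed

end
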